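(* Let $\mathcal{H}$ be a complex Hilbert space of $\mathbb{C}^n$-valued functions, with scalar product $\langle\cdot,\cdot\rangle$. Let $D$ be a selfadjoint operator on $\mathcal{H}$ with domain $\mathcal{D}_0$. Let $W_L,W_R$ be bounded selfadjoint operators on $\mathcal{H}$ such that: - $W_LW_R=W_RW_L$; - $W_L^{-1}$ and $W_R^{-1}$ exist and are bounded; - $W_RW_L^{-1}$ is selfadjoint; - $W_RW_L^{-1}\ge c\,\mathrm{id}$ for some $c>0$. Define $M=W_L\,D\,W_R$ with domain $\mathcal{D}_R:=W_R^{-1}\mathcal{D}_0$. Assume that complex conjugation $(C\Psi)(x)=\overline{\Psi(x)}$ satisfies $C\mathcal{D}_R=\mathcal{D}_R$ and $CMC=-M$. Let $\mathcal{H}_W$ denote $\mathcal{H}$ equipped with the scalar product $\langle\Phi,\Psi\rangle_W:=\langle\Phi,W\Psi\rangle$, where $W:=W_L^{-1}W_R$. Then $M$ is selfadjoint on $\mathcal{H}_W$ with dense domain $\mathcal{D}_R$.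
   Context: An operator $M=W_LDW_R$ satisfying these hypotheses is called a generalized Maxwell-type operator. *)

theory Defs
  imports "HOL-Analysis.Analysis" "HOL-Library.Function_Algebras"
begin

text \<open>Elements of the Hilbert space are functions 'x => complex^'n (C^n-valued functions).
  An inner product is a map ip; the convention is linear in the second argument.\<close>

type_synonym ('x, 'n) cfun = "'x \<Rightarrow> complex ^ 'n"

definition smul :: "complex \<Rightarrow> ('x, 'n::finite) cfun \<Rightarrow> ('x, 'n) cfun" where
  "smul a \<Psi> = (\<lambda>x. a *s \<Psi> x)"

definition cconj :: "('x, 'n::finite) cfun \<Rightarrow> ('x, 'n) cfun" where
  "cconj \<Psi> = (\<lambda>x. \<chi> i. cnj (\<Psi> x $ i))"

definition hnorm :: "(('x, 'n::finite) cfun \<Rightarrow> ('x, 'n) cfun \<Rightarrow> complex) \<Rightarrow> ('x, 'n) cfun \<Rightarrow> real" where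
  "hnorm ip \<Psi> = sqrt (Re (ip \<Psi> \<Psi>))"

definition csubspace_in :: "('x, 'n::finite) cfun set \<Rightarrow> bool" where
  "csubspace_in S \<longleftrightarrow> 0 \<in> S \<and> (\<forall>\<Phi>\<in>S. \<forall>\<Psi>\<in>S. \<Phi> + \<Psi> \<in> S) \<and> (\<forall>a. \<forall>\<Psi>\<in>S. smul a \<Psi> \<in> S)"

definition complex_hilbert :: "('x, 'n::finite) cfun set \<Rightarrow> (('x, 'n) cfun \<Rightarrow> ('x, 'n) cfun \<Rightarrow> complex) \<Rightarrow> bool" where
  "complex_hilbert H ip \<longleftrightarrow>
     csubspace_in H \<and>
     (\<forall>\<Phi>\<in>H. \<forall>\<Psi>\<in>H. \<forall>\<Xi>\<in>H. ip \<Phi> (\<Psi> + \<Xi>) = ip \<Phi> \<Psi> + ip \<Phi> \<Xi>) \<and>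
     (\<forall>a. \<forall>\<Phi>\<in>H. \<forall>\<Psi>\<in>H. ip \<Phi> (smul a \<Psi>) = a * ip \<Phi> \<Psi>) \<and>
     (\<forall>\<Phi>\<in>H. \<forall>\<Psi>\<in>H. ip \<Phi> \<Psi> = cnj (ip \<Psi> \<Phi>)) \<and>
     (\<forall>\<Psi>\<in>H. Im (ip \<Psi> \<Psi>) = 0 \<and> Re (ip \<Psi> \<Psi>) \<ge> 0) \<and>
     (\<forall>\<Psi>\<in>H. ip \<Psi> \<Psi> = 0 \<longrightarrow> \<Psi> = 0) \<and>
     (\<forall>X. (\<forall>k. X k \<in> H) \<and> (\<forall>e>0. \<exists>N. \<forall>m\<ge>N. \<forall>k\<ge>N. hnorm ip (X m - X k) < e)
          \<longrightarrow> (\<exists>L\<in>H. (\<lambda>k. hnorm ip (X k - L)) \<longlonglongrightarrow> 0))"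

definition lin_on :: "('x, 'n::finite) cfun set \<Rightarrow> (('x, 'n) cfun \<Rightarrow> ('x, 'n) cfun) \<Rightarrow> bool" where
  "lin_on S A \<longleftrightarrow> (\<forall>\<Phi>\<in>S. \<forall>\<Psi>\<in>S. A (\<Phi> + \<Psi>) = A \<Phi> + A \<Psi>) \<and> (\<forall>a. \<forall>\<Psi>\<in>S. A (smul a \<Psi>) = smul a (A \<Psi>))"

definition bounded_op :: "('x, 'n::finite) cfun set \<Rightarrow> (('x, 'n) cfun \<Rightarrow> ('x, 'n) cfun \<Rightarrow> complex) \<Rightarrow> (('x, 'n) cfun \<Rightarrow> ('x, 'n) cfun) \<Rightarrow> bool" where
  "bounded_op H ip A \<longleftrightarrow> (\<forall>\<Psi>\<in>H. A \<Psi> \<in> H) \<and> lin_on H A \<and> (\<exists>K. \<forall>\<Psi>\<in>H. hnorm ip (A \<Psi>) \<le> K * hnorm ip \<Psi>)"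

definition bounded_selfadjoint :: "('x, 'n::finite) cfun set \<Rightarrow> (('x, 'n) cfun \<Rightarrow> ('x, 'n) cfun \<Rightarrow> complex) \<Rightarrow> (('x, 'n) cfun \<Rightarrow> ('x, 'n) cfun) \<Rightarrow> bool" where
  "bounded_selfadjoint H ip A \<longleftrightarrow> bounded_op H ip A \<and> (\<forall>\<Phi>\<in>H. \<forall>\<Psi>\<in>H. ip (A \<Phi>) \<Psi> = ip \<Phi> (A \<Psi>))"

definition dense_in :: "('x, 'n::finite) cfun set \<Rightarrow> (('x, 'n) cfun \<Rightarrow> ('x, 'n) cfun \<Rightarrow> complex) \<Rightarrow> ('x, 'n) cfun set \<Rightarrow> bool" where
  "dense_in H ip S \<longleftrightarrow> S \<subseteq> H \<and> (\<forall>\<Psi>\<in>H. \<forall>e>0. \<exists>\<Phi>\<in>S. hnorm ip (\<Psi> - \<Phi>) < e)"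

definition adj_dom :: "('x, 'n::finite) cfun set \<Rightarrow> (('x, 'n) cfun \<Rightarrow> ('x, 'n) cfun \<Rightarrow> complex) \<Rightarrow> ('x, 'n) cfun set \<Rightarrow> (('x, 'n) cfun \<Rightarrow> ('x, 'n) cfun) \<Rightarrow> ('x, 'n) cfun set" where
  "adj_dom H ip Dom A = {\<Phi>\<in>H. \<exists>\<eta>\<in>H. \<forall>\<Psi>\<in>Dom. ip \<Phi> (A \<Psi>) = ip \<eta> \<Psi>}"

definition selfadjoint_op :: "('x, 'n::finite) cfun set \<Rightarrow> (('x, 'n) cfun \<Rightarrow> ('x, 'n) cfun \<Rightarrow> complex) \<Rightarrow> ('x, 'n) cfun set \<Rightarrow> (('x, 'n) cfun \<Rightarrow> ('x, 'n) cfun) \<Rightarrow> bool" where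
  "selfadjoint_op H ip Dom A \<longleftrightarrow>
     csubspace_in Dom \<and> dense_in H ip Dom \<and> (\<forall>\<Psi>\<in>Dom. A \<Psi> \<in> H) \<and> lin_on Dom A \<and>
     (\<forall>\<Phi>\<in>Dom. \<forall>\<Psi>\<in>Dom. ip (A \<Phi>) \<Psi> = ip \<Phi> (A \<Psi>)) \<and>
     adj_dom H ip Dom A = Dom"

end

theory Submission
  imports Defs
begin

text \<open>Under the weighted product \<open>\<langle>\<Phi>, \<Psi>\<rangle>\<^sub>W = \<langle>\<Phi>, W\<^sub>L\<^sup>-\<^sup>1 W\<^sub>R \<Psi>\<rangle>\<close> the substitution
  \<open>\<Psi> = W\<^sub>R\<^sup>-\<^sup>1 b\<close> turns \<open>\<langle>\<Phi>, M \<Psi>\<rangle>\<^sub>W\<close> into \<open>\<langle>W\<^sub>R \<Phi>, D b\<rangle>\<close> (using that \<open>W\<^sub>L\<close> and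
  \<open>W\<^sub>R\<close> commute) and \<open>\<langle>\<eta>, \<Psi>\<rangle>\<^sub>W\<close> into \<open>\<langle>W\<^sub>L\<^sup>-\<^sup>1 \<eta>, b\<rangle>\<close>. Hence \<open>M\<close> is symmetric because \<open>D\<close> is,
  and \<open>\<Phi>\<close> lies in the domain of the \<open>W\<close>-adjoint of \<open>M\<close> exactly when \<open>W\<^sub>R \<Phi>\<close> lies in that of \<open>D\<^sup>* = D\<close>.
  Density of \<open>W\<^sub>R\<^sup>-\<^sup>1 \<D>\<^sub>0\<close> follows from boundedness of \<open>W\<^sub>R\<^sup>-\<^sup>1\<close> and of \<open>W\<^sub>L\<^sup>-\<^sup>1 W\<^sub>R\<close>.\<close>

lemma smul_minus_one: "smul (-1) \<Psi> = - \<Psi>"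
  by (auto simp: smul_def fun_eq_iff vec_eq_iff)

lemma csubspace_in_zero: "csubspace_in S \<Longrightarrow> 0 \<in> S"
  by (simp add: csubspace_in_def)

lemma csubspace_in_add: "csubspace_in S \<Longrightarrow> \<Phi> \<in> S \<Longrightarrow> \<Psi> \<in> S \<Longrightarrow> \<Phi> + \<Psi> \<in> S"
  by (simp add: csubspace_in_def)

lemma csubspace_in_smul: "csubspace_in S \<Longrightarrow> \<Psi> \<in> S \<Longrightarrow> smul a \<Psi> \<in> S"
  by (simp add: csubspace_in_def)

lemma csubspace_in_diff: "csubspace_in S \<Longrightarrow> \<Phi> \<in> S \<Longrightarrow> \<Psi> \<in> S \<Longrightarrow> \<Phi> - \<Psi> \<in> S"
  using csubspace_in_add[of S \<Phi> "smul (-1) \<Psi>"] csubspace_in_smul[of S \<Psi> "-1"]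
  by (simp add: smul_minus_one)

lemma lin_on_add: "lin_on S A \<Longrightarrow> \<Phi> \<in> S \<Longrightarrow> \<Psi> \<in> S \<Longrightarrow> A (\<Phi> + \<Psi>) = A \<Phi> + A \<Psi>"
  by (simp add: lin_on_def)

lemma lin_on_smul: "lin_on S A \<Longrightarrow> \<Psi> \<in> S \<Longrightarrow> A (smul a \<Psi>) = smul a (A \<Psi>)"
  by (simp add: lin_on_def)

lemma lin_on_zero:
  assumes "lin_on S A" "csubspace_in S"
  shows "A 0 = 0"
  using lin_on_add[OF assms(1), of 0 0] csubspace_in_zero[OF assms(2)] by simp

lemma lin_on_diff:
  assumes "lin_on S A" "csubspace_in S" "\<Phi> \<in> S" "\<Psi> \<in> S"
  shows "A (\<Phi> - \<Psi>) = A \<Phi> - A \<Psi>"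
  using lin_on_add[OF assms(1,3), of "smul (-1) \<Psi>"] lin_on_smul[OF assms(1,4), of "-1"]
    csubspace_in_smul[OF assms(2,4), of "-1"]
  by (simp add: smul_minus_one)

lemma lin_on_subset: "lin_on S A \<Longrightarrow> T \<subseteq> S \<Longrightarrow> lin_on T A"
  unfolding lin_on_def by blast

lemma lin_on_comp:
  assumes "lin_on S A" "lin_on T B" "A ` S \<subseteq> T"
  shows "lin_on S (\<lambda>\<Psi>. B (A \<Psi>))"
  using assms by (auto simp: lin_on_def image_subset_iff)

lemma csubspace_in_image:
  assumes "lin_on H A" "csubspace_in H" "csubspace_in S" "S \<subseteq> H"
  shows "csubspace_in (A ` S)"
  unfolding csubspace_in_def
proof (intro conjI ballI allI)
  show "0 \<in> A ` S"
    using image_eqI[of 0 A 0 S] lin_on_zero[OF assms(1,2)] csubspace_in_zero[OF assms(3)] by simp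
next
  fix \<Phi> \<Psi> assume "\<Phi> \<in> A ` S" "\<Psi> \<in> A ` S"
  then obtain a b where ab: "a \<in> S" "b \<in> S" "\<Phi> = A a" "\<Psi> = A b" by blast
  have "\<Phi> + \<Psi> = A (a + b)"
    using lin_on_add[OF assms(1), of a b] ab assms(4) by (simp add: subset_iff)
  then show "\<Phi> + \<Psi> \<in> A ` S" using imageI[OF csubspace_in_add[OF assms(3) ab(1,2)], of A] by simp
next
  fix s \<Psi> assume "\<Psi> \<in> A ` S"
  then obtain b where b: "b \<in> S" "\<Psi> = A b" by blast
  have "smul s \<Psi> = A (smul s b)"
    using lin_on_smul[OF assms(1), of b] b assms(4) by (simp add: subset_iff)
  then show "smul s \<Psi> \<in> A ` S" using imageI[OF csubspace_in_smul[OF assms(3) b(1)], of A] by simp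
qed

lemma subset_adj_dom_if_symmetric:
  assumes "Dom \<subseteq> H" "\<forall>\<Psi>\<in>Dom. A \<Psi> \<in> H"
    and "\<forall>\<Phi>\<in>Dom. \<forall>\<Psi>\<in>Dom. ip (A \<Phi>) \<Psi> = ip \<Phi> (A \<Psi>)"
  shows "Dom \<subseteq> adj_dom H ip Dom A"
  unfolding adj_dom_def
proof (intro subsetI CollectI conjI)
  fix \<Phi> assume \<Phi>: "\<Phi> \<in> Dom"
  show "\<Phi> \<in> H" using \<Phi> assms(1) by blast
  show "\<exists>\<eta>\<in>H. \<forall>\<Psi>\<in>Dom. ip \<Phi> (A \<Psi>) = ip \<eta> \<Psi>"
    using \<Phi> assms(2,3) by (intro bexI[of _ "A \<Phi>"]) auto
qed

lemma complex_hilbertD: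
  assumes "complex_hilbert H ip"
  shows "csubspace_in H"
    and "\<forall>\<Phi>\<in>H. \<forall>\<Psi>\<in>H. \<forall>\<Xi>\<in>H. ip \<Phi> (\<Psi> + \<Xi>) = ip \<Phi> \<Psi> + ip \<Phi> \<Xi>"
    and "\<forall>a. \<forall>\<Phi>\<in>H. \<forall>\<Psi>\<in>H. ip \<Phi> (smul a \<Psi>) = a * ip \<Phi> \<Psi>"
    and "\<forall>\<Phi>\<in>H. \<forall>\<Psi>\<in>H. ip \<Phi> \<Psi> = cnj (ip \<Psi> \<Phi>)"
    and "\<forall>\<Psi>\<in>H. Im (ip \<Psi> \<Psi>) = 0 \<and> Re (ip \<Psi> \<Psi>) \<ge> 0"
  using assms unfolding complex_hilbert_def by - (elim conjE, assumption)+

context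
  fixes H :: "('x, 'n::finite) cfun set" and ip
  assumes hilb: "complex_hilbert H ip"
begin

lemma csubspace_in_space: "csubspace_in H"
  using complex_hilbertD(1)[OF hilb] .

lemma ip_add_right: "\<Phi> \<in> H \<Longrightarrow> \<Psi> \<in> H \<Longrightarrow> \<Xi> \<in> H \<Longrightarrow> ip \<Phi> (\<Psi> + \<Xi>) = ip \<Phi> \<Psi> + ip \<Phi> \<Xi>"
  using complex_hilbertD(2)[OF hilb] by blast

lemma ip_smul_right: "\<Phi> \<in> H \<Longrightarrow> \<Psi> \<in> H \<Longrightarrow> ip \<Phi> (smul a \<Psi>) = a * ip \<Phi> \<Psi>"
  using complex_hilbertD(3)[OF hilb] by blast

lemma ip_cnj_swap: "\<Phi> \<in> H \<Longrightarrow> \<Psi> \<in> H \<Longrightarrow> ip \<Phi> \<Psi> = cnj (ip \<Psi> \<Phi>)"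
  using complex_hilbertD(4)[OF hilb] by blast

lemma Re_ip_self_nonneg: "\<Psi> \<in> H \<Longrightarrow> Re (ip \<Psi> \<Psi>) \<ge> 0"
  using complex_hilbertD(5)[OF hilb] by blast

lemma ip_diff_right:
  assumes "\<Phi> \<in> H" "\<Psi> \<in> H" "\<Xi> \<in> H"
  shows "ip \<Phi> (\<Psi> - \<Xi>) = ip \<Phi> \<Psi> - ip \<Phi> \<Xi>"
  using ip_add_right[OF assms(1,2), of "smul (-1) \<Xi>"] ip_smul_right[OF assms(1,3), of "-1"]
    csubspace_in_smul[OF csubspace_in_space assms(3), of "-1"]
  by (simp add: smul_minus_one)

lemma ip_diff_left:
  assumes "\<Phi> \<in> H" "\<Psi> \<in> H" "\<Xi> \<in> H"
  shows "ip (\<Phi> - \<Psi>) \<Xi> = ip \<Phi> \<Xi> - ip \<Psi> \<Xi>"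
proof -
  have "ip (\<Phi> - \<Psi>) \<Xi> = cnj (ip \<Xi> (\<Phi> - \<Psi>))"
    using ip_cnj_swap[OF csubspace_in_diff[OF csubspace_in_space assms(1,2)] assms(3)] .
  also have "\<dots> = cnj (ip \<Xi> \<Phi>) - cnj (ip \<Xi> \<Psi>)" using ip_diff_right[OF assms(3,1,2)] by simp
  also have "\<dots> = ip \<Phi> \<Xi> - ip \<Psi> \<Xi>"
    using ip_cnj_swap[OF assms(1,3)] ip_cnj_swap[OF assms(2,3)] by simp
  finally show ?thesis .
qed

lemma hnorm_nonneg: "\<Psi> \<in> H \<Longrightarrow> hnorm ip \<Psi> \<ge> 0"
  using Re_ip_self_nonneg by (simp add: hnorm_def)

lemma hnorm_power2: "\<Psi> \<in> H \<Longrightarrow> hnorm ip \<Psi> ^ 2 = Re (ip \<Psi> \<Psi>)"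
  using Re_ip_self_nonneg by (simp add: hnorm_def)

lemma two_Re_ip_le:
  assumes "\<Phi> \<in> H" "\<Psi> \<in> H"
  shows "2 * Re (ip \<Phi> \<Psi>) \<le> hnorm ip \<Phi> ^ 2 + hnorm ip \<Psi> ^ 2"
proof -
  have diff: "\<Phi> - \<Psi> \<in> H" using csubspace_in_diff[OF csubspace_in_space assms] .
  have "ip (\<Phi> - \<Psi>) (\<Phi> - \<Psi>) = ip \<Phi> \<Phi> - ip \<Phi> \<Psi> - (ip \<Psi> \<Phi> - ip \<Psi> \<Psi>)"
    using ip_diff_left[OF assms diff] ip_diff_right assms by simp
  moreover have "Re (ip \<Psi> \<Phi>) = Re (ip \<Phi> \<Psi>)" using ip_cnj_swap[OF assms(2,1)] by simp
  ultimately show ?thesis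
    using Re_ip_self_nonneg[OF diff] hnorm_power2 assms by simp
qed

lemma bounded_op_nonneg_bound:
  assumes "bounded_op H ip A"
  obtains K where "K \<ge> 0" "\<forall>\<Psi>\<in>H. hnorm ip (A \<Psi>) \<le> K * hnorm ip \<Psi>"
proof -
  obtain K where K: "\<forall>\<Psi>\<in>H. hnorm ip (A \<Psi>) \<le> K * hnorm ip \<Psi>"
    using assms unfolding bounded_op_def by blast
  have "hnorm ip (A \<Psi>) \<le> max K 0 * hnorm ip \<Psi>" if "\<Psi> \<in> H" for \<Psi>
  proof -
    have "K * hnorm ip \<Psi> \<le> max K 0 * hnorm ip \<Psi>"
      using hnorm_nonneg[OF that] by (simp add: mult_right_mono)
    then show ?thesis using K that by (meson order_trans)
  qed
  then show ?thesis by (intro that[of "max K 0"]) auto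
qed

lemma bounded_op_comp:
  assumes A: "bounded_op H ip A" and B: "bounded_op H ip B"
  shows "bounded_op H ip (\<lambda>\<Psi>. A (B \<Psi>))"
proof -
  obtain KA where KA: "KA \<ge> 0" "\<forall>\<Psi>\<in>H. hnorm ip (A \<Psi>) \<le> KA * hnorm ip \<Psi>"
    using bounded_op_nonneg_bound[OF A] .
  obtain KB where KB: "KB \<ge> 0" "\<forall>\<Psi>\<in>H. hnorm ip (B \<Psi>) \<le> KB * hnorm ip \<Psi>"
    using bounded_op_nonneg_bound[OF B] .
  have AH: "\<forall>\<Psi>\<in>H. A \<Psi> \<in> H" and BH: "\<forall>\<Psi>\<in>H. B \<Psi> \<in> H"
    and "lin_on H A" "lin_on H B"
    using A B unfolding bounded_op_def by blast+
  then have lin: "lin_on H (\<lambda>\<Psi>. A (B \<Psi>))" using lin_on_comp[of H B H A] by blast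
  have bound: "hnorm ip (A (B \<Psi>)) \<le> (KA * KB) * hnorm ip \<Psi>" if "\<Psi> \<in> H" for \<Psi>
  proof -
    have "hnorm ip (A (B \<Psi>)) \<le> KA * hnorm ip (B \<Psi>)" using KA(2) BH that by blast
    also have "\<dots> \<le> KA * (KB * hnorm ip \<Psi>)" using KA(1) KB(2) that by (simp add: mult_left_mono)
    finally show ?thesis by simp
  qed
  show ?thesis
    unfolding bounded_op_def using AH BH lin bound by (intro conjI exI[of _ "KA * KB"]) auto
qed

lemma hnorm_weighted_le:
  assumes "bounded_op H ip T"
  obtains K where "K \<ge> 0" "\<forall>\<Psi>\<in>H. hnorm (\<lambda>\<Phi> \<Psi>. ip \<Phi> (T \<Psi>)) \<Psi> \<le> K * hnorm ip \<Psi>"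
proof -
  obtain K where K: "K \<ge> 0" "\<forall>\<Psi>\<in>H. hnorm ip (T \<Psi>) \<le> K * hnorm ip \<Psi>"
    using bounded_op_nonneg_bound[OF assms] .
  have "hnorm (\<lambda>\<Phi> \<Psi>. ip \<Phi> (T \<Psi>)) \<Psi> \<le> (1 + K) * hnorm ip \<Psi>" if \<Psi>: "\<Psi> \<in> H" for \<Psi>
  proof -
    let ?n = "hnorm ip \<Psi>"
    have T\<Psi>: "T \<Psi> \<in> H" using assms \<Psi> by (simp add: bounded_op_def)
    have n: "?n \<ge> 0" using hnorm_nonneg[OF \<Psi>] .
    have "hnorm ip (T \<Psi>) ^ 2 \<le> (K * ?n) ^ 2"
      using K \<Psi> hnorm_nonneg[OF T\<Psi>] by (simp add: power_mono)
    then have "2 * Re (ip \<Psi> (T \<Psi>)) \<le> ?n ^ 2 + (K * ?n) ^ 2"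
      using two_Re_ip_le[OF \<Psi> T\<Psi>] by simp
    also have "\<dots> \<le> 2 * ((1 + K) * ?n) ^ 2"
      using K(1) n by (simp add: power2_eq_square algebra_simps mult_nonneg_nonneg)
    finally have "Re (ip \<Psi> (T \<Psi>)) \<le> ((1 + K) * ?n) ^ 2" by simp
    then show ?thesis
      using K(1) n by (simp add: hnorm_def real_le_lsqrt)
  qed
  then show ?thesis using K(1) by (intro that[of "1 + K"]) auto
qed

lemma dense_in_if_hnorm_le:
  assumes "dense_in H ip S" "K \<ge> 0" "\<forall>\<Psi>\<in>H. hnorm ip' \<Psi> \<le> K * hnorm ip \<Psi>"
  shows "dense_in H ip' S"
  unfolding dense_in_def
proof (intro conjI ballI allI impI)
  show "S \<subseteq> H" using assms(1) by (simp add: dense_in_def)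
  fix \<Psi> and e :: real assume \<Psi>: "\<Psi> \<in> H" and e: "e > 0"
  have "e / (1 + K) > 0" using e assms(2) by simp
  then obtain \<Phi> where \<Phi>: "\<Phi> \<in> S" "hnorm ip (\<Psi> - \<Phi>) < e / (1 + K)"
    using assms(1) \<Psi> unfolding dense_in_def by blast
  have diff: "\<Psi> - \<Phi> \<in> H"
    using csubspace_in_diff[OF csubspace_in_space \<Psi>] \<Phi>(1) assms(1) by (auto simp: dense_in_def)
  have "hnorm ip' (\<Psi> - \<Phi>) \<le> K * hnorm ip (\<Psi> - \<Phi>)" using assms(3) diff by blast
  also have "\<dots> \<le> (1 + K) * hnorm ip (\<Psi> - \<Phi>)"
    using hnorm_nonneg[OF diff] by (simp add: mult_right_mono)
  also have "\<dots> < e" using \<Phi>(2) assms(2) by (simp add: pos_less_divide_eq mult.commute)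
  finally show "\<exists>\<Phi>\<in>S. hnorm ip' (\<Psi> - \<Phi>) < e" using \<Phi>(1) by blast
qed

lemma dense_in_image:
  assumes "dense_in H ip S" "bounded_op H ip A"
    and "\<forall>\<Psi>\<in>H. B \<Psi> \<in> H \<and> A (B \<Psi>) = \<Psi>"
  shows "dense_in H ip (A ` S)"
  unfolding dense_in_def
proof (intro conjI ballI allI impI)
  have SH: "S \<subseteq> H" using assms(1) by (simp add: dense_in_def)
  then show "A ` S \<subseteq> H" using assms(2) by (auto simp: bounded_op_def)
  obtain K where K: "K \<ge> 0" "\<forall>\<Psi>\<in>H. hnorm ip (A \<Psi>) \<le> K * hnorm ip \<Psi>"
    using bounded_op_nonneg_bound[OF assms(2)] .
  fix \<Psi> and e :: real assume \<Psi>: "\<Psi> \<in> H" and e: "e > 0"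
  have B\<Psi>: "B \<Psi> \<in> H" "A (B \<Psi>) = \<Psi>" using assms(3) \<Psi> by auto
  have "e / (1 + K) > 0" using e K(1) by simp
  then obtain \<phi> where \<phi>: "\<phi> \<in> S" "hnorm ip (B \<Psi> - \<phi>) < e / (1 + K)"
    using assms(1) B\<Psi>(1) unfolding dense_in_def by blast
  have diff: "B \<Psi> - \<phi> \<in> H" using csubspace_in_diff[OF csubspace_in_space B\<Psi>(1)] \<phi>(1) SH by auto
  have "\<Psi> - A \<phi> = A (B \<Psi> - \<phi>)"
    using lin_on_diff[of H A, OF _ csubspace_in_space B\<Psi>(1)] assms(2) \<phi>(1) SH B\<Psi>(2)
    by (auto simp: bounded_op_def)
  then have "hnorm ip (\<Psi> - A \<phi>) \<le> K * hnorm ip (B \<Psi> - \<phi>)" using K(2) diff by simp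
  also have "\<dots> \<le> (1 + K) * hnorm ip (B \<Psi> - \<phi>)"
    using hnorm_nonneg[OF diff] by (simp add: mult_right_mono)
  also have "\<dots> < e" using \<phi>(2) K(1) by (simp add: pos_less_divide_eq mult.commute)
  finally show "\<exists>\<Phi>\<in>A ` S. hnorm ip (\<Psi> - \<Phi>) < e" using \<phi>(1) by blast
qed

lemma ip_inverse_selfadjoint:
  assumes "bounded_selfadjoint H ip A" "\<forall>\<Psi>\<in>H. B \<Psi> \<in> H \<and> A (B \<Psi>) = \<Psi>"
    and "\<Phi> \<in> H" "\<Psi> \<in> H"
  shows "ip \<Phi> (B \<Psi>) = ip (B \<Phi>) \<Psi>"
proof -
  have "ip \<Phi> (B \<Psi>) = ip (A (B \<Phi>)) (B \<Psi>)" using assms(2,3) by simp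
  also have "\<dots> = ip (B \<Phi>) (A (B \<Psi>))"
    using assms unfolding bounded_selfadjoint_def by blast
  also have "\<dots> = ip (B \<Phi>) \<Psi>" using assms(2,4) by simp
  finally show ?thesis .
qed

end

locale weighted_sandwich =
  fixes H :: "('x, 'n::finite) cfun set" and ip
    and D WL WR WLi WRi :: "('x, 'n) cfun \<Rightarrow> ('x, 'n) cfun" and D0 :: "('x, 'n) cfun set"
  assumes hilb: "complex_hilbert H ip"
    and D_sa: "selfadjoint_op H ip D0 D"
    and WL_sa: "bounded_selfadjoint H ip WL"
    and WR_sa: "bounded_selfadjoint H ip WR"
    and comm: "\<forall>\<Psi>\<in>H. WL (WR \<Psi>) = WR (WL \<Psi>)"
    and WLi_bd: "bounded_op H ip WLi"
    and WLi_inv: "\<forall>\<Psi>\<in>H. WLi (WL \<Psi>) = \<Psi> \<and> WL (WLi \<Psi>) = \<Psi>"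
    and WRi_bd: "bounded_op H ip WRi"
    and WRi_inv: "\<forall>\<Psi>\<in>H. WRi (WR \<Psi>) = \<Psi> \<and> WR (WRi \<Psi>) = \<Psi>"
begin

definition weighted_ip where "weighted_ip = (\<lambda>\<Phi> \<Psi>. ip \<Phi> (WLi (WR \<Psi>)))"

definition M where "M = (\<lambda>\<Psi>. WL (D (WR \<Psi>)))"

lemma D0_subset: "D0 \<subseteq> H"
  using D_sa by (simp add: selfadjoint_op_def dense_in_def)

lemma D_in_H: "b \<in> D0 \<Longrightarrow> D b \<in> H"
  using D_sa by (simp add: selfadjoint_op_def)

lemma WL_in_H: "\<Psi> \<in> H \<Longrightarrow> WL \<Psi> \<in> H"
  using WL_sa by (simp add: bounded_selfadjoint_def bounded_op_def)

lemma WR_in_H: "\<Psi> \<in> H \<Longrightarrow> WR \<Psi> \<in> H"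
  using WR_sa by (simp add: bounded_selfadjoint_def bounded_op_def)

lemma WLi_in_H: "\<Psi> \<in> H \<Longrightarrow> WLi \<Psi> \<in> H"
  using WLi_bd by (simp add: bounded_op_def)

lemma WRi_in_H: "\<Psi> \<in> H \<Longrightarrow> WRi \<Psi> \<in> H"
  using WRi_bd by (simp add: bounded_op_def)

lemma domain_subset: "WRi ` D0 \<subseteq> H"
  using D0_subset WRi_in_H by blast

lemma WR_WRi_domain: "b \<in> D0 \<Longrightarrow> WR (WRi b) = b"
  using WRi_inv D0_subset by blast

lemma M_WRi: "b \<in> D0 \<Longrightarrow> M (WRi b) = WL (D b)"
  by (simp add: M_def WR_WRi_domain)

lemma weighted_ip_WRi: "\<eta> \<in> H \<Longrightarrow> b \<in> H \<Longrightarrow> weighted_ip \<eta> (WRi b) = ip (WLi \<eta>) b"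
  using WRi_inv ip_inverse_selfadjoint[OF hilb WL_sa] WLi_inv WLi_in_H
  by (simp add: weighted_ip_def)

lemma weighted_ip_M_WRi:
  assumes "\<Phi> \<in> H" "b \<in> D0"
  shows "weighted_ip \<Phi> (M (WRi b)) = ip (WR \<Phi>) (D b)"
proof -
  have "WLi (WR (WL (D b))) = WLi (WL (WR (D b)))" using comm D_in_H assms(2) by simp
  also have "\<dots> = WR (D b)" using WLi_inv WR_in_H D_in_H assms(2) by simp
  finally show ?thesis
    using WR_sa assms D_in_H unfolding bounded_selfadjoint_def
    by (simp add: weighted_ip_def M_WRi)
qed

lemma M_symmetric:
  assumes "\<Phi> \<in> WRi ` D0" "\<Psi> \<in> WRi ` D0"
  shows "weighted_ip (M \<Phi>) \<Psi> = weighted_ip \<Phi> (M \<Psi>)"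
proof -
  obtain a b where ab: "a \<in> D0" "b \<in> D0" "\<Phi> = WRi a" "\<Psi> = WRi b" using assms by blast
  have H: "a \<in> H" "b \<in> H" using ab D0_subset by auto
  have "weighted_ip (M \<Phi>) \<Psi> = ip (WLi (WL (D a))) b"
    using ab H WL_in_H D_in_H by (simp add: M_WRi weighted_ip_WRi)
  also have "\<dots> = ip a (D b)"
    using WLi_inv D_in_H ab D_sa unfolding selfadjoint_op_def by simp
  also have "\<dots> = weighted_ip \<Phi> (M \<Psi>)"
    using ab H WRi_in_H by (simp add: weighted_ip_M_WRi WR_WRi_domain)
  finally show ?thesis .
qed

lemma adj_dom_M: "adj_dom H weighted_ip (WRi ` D0) M = WRi ` D0"
proof
  show "WRi ` D0 \<subseteq> adj_dom H weighted_ip (WRi ` D0) M"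
    using domain_subset M_symmetric D_in_H WL_in_H
    by (intro subset_adj_dom_if_symmetric) (auto simp: M_WRi)
next
  show "adj_dom H weighted_ip (WRi ` D0) M \<subseteq> WRi ` D0"
  proof
    fix \<Phi> assume "\<Phi> \<in> adj_dom H weighted_ip (WRi ` D0) M"
    then obtain \<eta> where \<Phi>: "\<Phi> \<in> H" and \<eta>: "\<eta> \<in> H"
      and adj: "\<forall>\<Psi>\<in>WRi ` D0. weighted_ip \<Phi> (M \<Psi>) = weighted_ip \<eta> \<Psi>"
      unfolding adj_dom_def by blast
    have "\<forall>b\<in>D0. ip (WR \<Phi>) (D b) = ip (WLi \<eta>) b"
      using adj \<Phi> \<eta> D0_subset by (auto simp: weighted_ip_M_WRi weighted_ip_WRi)
    then have "WR \<Phi> \<in> adj_dom H ip D0 D"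
      unfolding adj_dom_def using WR_in_H[OF \<Phi>] WLi_in_H[OF \<eta>] by blast
    then have "WR \<Phi> \<in> D0" using D_sa by (simp add: selfadjoint_op_def)
    then show "\<Phi> \<in> WRi ` D0" using WRi_inv \<Phi> by (metis image_eqI)
  qed
qed

lemma dense_domain: "dense_in H weighted_ip (WRi ` D0)"
proof -
  have "dense_in H ip (WRi ` D0)"
    using dense_in_image[OF hilb _ WRi_bd, of D0 WR] D_sa WRi_inv WR_in_H
    by (simp add: selfadjoint_op_def)
  moreover obtain K where "K \<ge> 0" "\<forall>\<Psi>\<in>H. hnorm weighted_ip \<Psi> \<le> K * hnorm ip \<Psi>"
    using hnorm_weighted_le[OF hilb bounded_op_comp[OF hilb WLi_bd]] WR_sa
    unfolding weighted_ip_def bounded_selfadjoint_def by blast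
  ultimately show ?thesis using dense_in_if_hnorm_le[OF hilb] by blast
qed

lemma selfadjoint_M: "selfadjoint_op H weighted_ip (WRi ` D0) M"
proof -
  have WRi_lin: "lin_on H WRi" and WR_lin: "lin_on H WR" and WL_lin: "lin_on H WL"
    using WRi_bd WR_sa WL_sa by (simp_all add: bounded_selfadjoint_def bounded_op_def)
  have D_lin: "lin_on D0 D" and D0_csub: "csubspace_in D0"
    using D_sa by (simp_all add: selfadjoint_op_def)
  have "csubspace_in (WRi ` D0)"
    using csubspace_in_image[OF WRi_lin csubspace_in_space[OF hilb] D0_csub D0_subset] .
  moreover have "lin_on (WRi ` D0) M"
  proof -
    have "WR ` WRi ` D0 \<subseteq> D0" using WR_WRi_domain by auto
    then have "lin_on (WRi ` D0) (\<lambda>\<Psi>. D (WR \<Psi>))"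
      using lin_on_comp[OF lin_on_subset[OF WR_lin domain_subset] D_lin] by blast
    moreover have "(\<lambda>\<Psi>. D (WR \<Psi>)) ` WRi ` D0 \<subseteq> H" using D_in_H WR_WRi_domain by auto
    ultimately show ?thesis unfolding M_def using lin_on_comp[OF _ WL_lin] by blast
  qed
  moreover have "\<forall>\<Psi>\<in>WRi ` D0. M \<Psi> \<in> H" using M_WRi WL_in_H D_in_H by auto
  ultimately show ?thesis
    unfolding selfadjoint_op_def using dense_domain M_symmetric adj_dom_M by blast
qed

end

theorem proposition6p2:
  fixes H :: "('x \<Rightarrow> complex ^ 'n::finite) set"
    and ip :: "('x \<Rightarrow> complex ^ 'n) \<Rightarrow> ('x \<Rightarrow> complex ^ 'n) \<Rightarrow> complex"
    and D WL WR WLi WRi :: "('x \<Rightarrow> complex ^ 'n) \<Rightarrow> ('x \<Rightarrow> complex ^ 'n)"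
    and D0 :: "('x \<Rightarrow> complex ^ 'n) set"
    and c :: real
  assumes hilb: "complex_hilbert H ip"
    and D_sa: "selfadjoint_op H ip D0 D"
    and WL_sa: "bounded_selfadjoint H ip WL"
    and WR_sa: "bounded_selfadjoint H ip WR"
    and comm: "\<forall>\<Psi>\<in>H. WL (WR \<Psi>) = WR (WL \<Psi>)"
    and WLi_bd: "bounded_op H ip WLi"
    and WLi_inv: "\<forall>\<Psi>\<in>H. WLi (WL \<Psi>) = \<Psi> \<and> WL (WLi \<Psi>) = \<Psi>"
    and WRi_bd: "bounded_op H ip WRi"
    and WRi_inv: "\<forall>\<Psi>\<in>H. WRi (WR \<Psi>) = \<Psi> \<and> WR (WRi \<Psi>) = \<Psi>"
    and WRWLi_sa: "bounded_selfadjoint H ip (\<lambda>\<Psi>. WR (WLi \<Psi>))"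
    and c_pos: "c > 0"
    and WRWLi_ge: "\<forall>\<Psi>\<in>H. c * Re (ip \<Psi> \<Psi>) \<le> Re (ip \<Psi> (WR (WLi \<Psi>)))"
    and C_dom: "cconj ` (WRi ` D0) = WRi ` D0"
    and C_anti: "\<forall>\<Psi>\<in>WRi ` D0. cconj (WL (D (WR (cconj \<Psi>)))) = - WL (D (WR \<Psi>))"
  shows "selfadjoint_op H (\<lambda>\<Phi> \<Psi>. ip \<Phi> (WLi (WR \<Psi>))) (WRi ` D0) (\<lambda>\<Psi>. WL (D (WR \<Psi>)))"
proof -
  interpret weighted_sandwich H ip D WL WR WLi WRi D0
    using hilb D_sa WL_sa WR_sa comm WLi_bd WLi_inv WRi_bd WRi_inv by unfold_locales
  show ?thesis using selfadjoint_M unfolding weighted_ip_def M_def .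
qed

end
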